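(* Let $r\ge2$ be an integer, $c>0$ and $f\in\mathcal{P}_c$. Then for every $n\in\mathbb{N}_0$, $$H_tf(x)=\min_{k\in\{0,1,\dots,r^n\}}q_f\Big(t,x;\frac{k}{r^n}\Big)\quad\text{for all }(t,x)\in\Big[\frac{1}{2cr^n},\infty\Big)\times[0,1].$$
   Context: $C_p(\mathbb{R})$ denotes the set of all continuous functions $f:\mathbb{R}\to\mathbb{R}$ periodic with period $1$ with $f(0)=0$; $\mathbb{N}_0=\mathbb{N}\cup\{0\}$. For such $f$, $q_f(t,x;z)=f(z)+\frac{1}{2t}(x-z)^2$ and $H_tf(x)=\inf_{z\in\mathbb{R}}q_f(t,x;z)$ for $t>0$, $x\in\mathbb{R}$. For $(n,k,y)\in\mathbb{N}_0\times\mathbb{Z}\times(0,1)$: $\delta^+_{n,k}(y;f)=\dfrac{f(\frac{k+1}{r^n})-f(\frac{k+y}{r^n})}{\frac{1-y}{r^n}}$, $\delta^-_{n,k}(y;f)=\dfrac{f(\frac{k+y}{r^n})-f(\frac{k}{r^n})}{\frac{y}{r^n}}$. $\mathcal{P}_c$ is the set of $f\in C_p(\mathbb{R})$ with $\delta^+_{n,k}(y;f)-\delta^-_{n,k}(y;f)\le-c$ for all $(n,k,y)\in\mathbb{N}_0\times\mathbb{Z}\times(0,1)$. *)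

theory Defs
  imports "HOL-Analysis.Analysis"
begin

definition Cp :: "(real \<Rightarrow> real) set" where
  "Cp = {f. continuous_on UNIV f \<and> (\<forall>x. f (x + 1) = f x) \<and> f 0 = 0}"

definition qf :: "(real \<Rightarrow> real) \<Rightarrow> real \<Rightarrow> real \<Rightarrow> real \<Rightarrow> real" where
  "qf f t x z = f z + (x - z)^2 / (2 * t)"

definition Ht :: "real \<Rightarrow> (real \<Rightarrow> real) \<Rightarrow> real \<Rightarrow> real" where
  "Ht t f x = (INF z. qf f t x z)"

definition delta_plus :: "nat \<Rightarrow> (real \<Rightarrow> real) \<Rightarrow> nat \<Rightarrow> int \<Rightarrow> real \<Rightarrow> real" where
  "delta_plus r f n k y =
     (f ((of_int k + 1) / real r ^ n) - f ((of_int k + y) / real r ^ n)) / ((1 - y) / real r ^ n)"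

definition delta_minus :: "nat \<Rightarrow> (real \<Rightarrow> real) \<Rightarrow> nat \<Rightarrow> int \<Rightarrow> real \<Rightarrow> real" where
  "delta_minus r f n k y =
     (f ((of_int k + y) / real r ^ n) - f (of_int k / real r ^ n)) / (y / real r ^ n)"

definition Pc :: "nat \<Rightarrow> real \<Rightarrow> (real \<Rightarrow> real) set" where
  "Pc r c = {f \<in> Cp. \<forall>n k y. 0 < y \<and> y < 1 \<longrightarrow>
               delta_plus r f n k y - delta_minus r f n k y \<le> - c}"

end

theory Submission
  imports Defs "HOL-Library.Periodic_Fun"
begin

text \<open>
  Multiplying the defining inequality of \<open>Pc r c\<close> by \<open>y (1 - y) / r\<^sup>n\<close> shows that at the point
  \<open>(k + y) / r\<^sup>n\<close> of a grid cell \<open>[k/r\<^sup>n, (k+1)/r\<^sup>n]\<close> the function \<open>f\<close> lies above its chord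
  by at least \<open>c y (1 - y) / r\<^sup>n\<close>, while \<open>(x - z)\<^sup>2 / 2t\<close> lies below its chord by exactly
  \<open>y (1 - y) / (2 t r\<^sup>2\<^sup>n)\<close>. Once \<open>t \<ge> 1 / (2 c r\<^sup>n)\<close> the first effect wins, so \<open>q\<^sub>f(t, x; \<cdot>)\<close>
  lies above its chord on every cell and is minimised at a grid point. For \<open>n = 0\<close> the same
  inequality gives \<open>f \<ge> 0\<close>, and \<open>f\<close> vanishes at the integers, so for \<open>x \<in> [0, 1]\<close> no
  \<open>z \<notin> [0, 1]\<close> beats \<open>z = 0\<close> or \<open>z = 1\<close>.
\<close>

lemma INF_eq_MIN_if_dominated:
  fixes g :: "'a \<Rightarrow> 'b::conditionally_complete_linorder"
  assumes "finite K" "K \<noteq> {}" and dominated: "\<And>z. \<exists>k\<in>K. g (p k) \<le> g z"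
  shows "(INF z. g z) = (MIN k\<in>K. g (p k))"
proof (rule cInf_eq_minimum)
  have "(MIN k\<in>K. g (p k)) \<in> (\<lambda>k. g (p k)) ` K"
    using assms(1,2) by (intro Min_in) auto
  then show "(MIN k\<in>K. g (p k)) \<in> range g" by auto
next
  fix y assume "y \<in> range g"
  then obtain z where "y = g z" by auto
  with dominated[of z] assms(1) show "(MIN k\<in>K. g (p k)) \<le> y"
    by (auto intro: order_trans[OF Min_le])
qed

lemma min_le_convex_combination:
  fixes a b y :: real
  assumes "0 \<le> y" "y \<le> 1"
  shows "min a b \<le> (1 - y) * a + y * b"
proof -
  have "(1 - y) * min a b \<le> (1 - y) * a" "y * min a b \<le> y * b"
    using assms by (simp_all add: mult_left_mono)
  then show ?thesis by (simp add: algebra_simps)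
qed

lemma min_endpoints_le_interior:
  fixes A B F a h t c x y :: real
  assumes y: "0 \<le> y" "y \<le> 1" and "0 < t" "0 \<le> h" "h \<le> 2 * t * c"
    and above_chord: "(1 - y) * A + y * B + c * y * (1 - y) * h \<le> F"
  shows "min (A + (x - a)\<^sup>2 / (2 * t)) (B + (x - (a + h))\<^sup>2 / (2 * t))
           \<le> F + (x - (a + y * h))\<^sup>2 / (2 * t)"
proof -
  have quadratic_below_chord:
    "(x - (a + y * h))\<^sup>2 / (2 * t)
       = (1 - y) * ((x - a)\<^sup>2 / (2 * t)) + y * ((x - (a + h))\<^sup>2 / (2 * t))
         - y * (1 - y) * (h\<^sup>2 / (2 * t))"
    using \<open>0 < t\<close> by (simp add: field_simps power2_eq_square)
  have "h\<^sup>2 \<le> c * h * (2 * t)"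
    using mult_left_mono[OF \<open>h \<le> 2 * t * c\<close> \<open>0 \<le> h\<close>] by (simp add: power2_eq_square algebra_simps)
  then have "h\<^sup>2 / (2 * t) \<le> c * h"
    using \<open>0 < t\<close> by (simp add: divide_simps)
  then have "y * (1 - y) * (h\<^sup>2 / (2 * t)) \<le> y * (1 - y) * (c * h)"
    using y by (intro mult_left_mono) auto
  then have "(1 - y) * (A + (x - a)\<^sup>2 / (2 * t)) + y * (B + (x - (a + h))\<^sup>2 / (2 * t))
               \<le> F + (x - (a + y * h))\<^sup>2 / (2 * t)"
    using above_chord quadratic_below_chord by (simp add: algebra_simps)
  then show ?thesis
    using min_le_convex_combination[OF y] by (rule order_trans[rotated])
qed

lemma Cp_of_int:
  assumes "f \<in> Cp"
  shows "f (of_int k) = 0"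
proof -
  interpret periodic_fun_simple' f
    using assms by unfold_locales (simp add: Cp_def)
  show ?thesis
    using assms by (simp add: of_int Cp_def)
qed

lemma Pc_above_chord:
  assumes "f \<in> Pc r c" "0 < r ^ n" "0 < y" "y < 1"
  shows "(1 - y) * f (of_int k / real r ^ n) + y * f ((of_int k + 1) / real r ^ n)
           + c * y * (1 - y) / real r ^ n \<le> f ((of_int k + y) / real r ^ n)"
proof -
  define R where "R = real r ^ n"
  have "0 < R" "0 \<le> y * (1 - y) / R"
    using assms(2-4) by (simp_all add: R_def)
  have "y * (f ((of_int k + 1) / R) - f ((of_int k + y) / R))
          - (1 - y) * (f ((of_int k + y) / R) - f (of_int k / R))
        = (delta_plus r f n k y - delta_minus r f n k y) * (y * (1 - y) / R)"
    using \<open>0 < R\<close> assms(3,4) by (simp add: delta_plus_def delta_minus_def R_def field_simps)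
  also have "\<dots> \<le> - c * (y * (1 - y) / R)"
    using assms(1,3,4) \<open>0 \<le> y * (1 - y) / R\<close> by (intro mult_right_mono) (simp_all add: Pc_def)
  finally show ?thesis
    by (simp add: R_def algebra_simps diff_divide_distrib)
qed

lemma Pc_nonneg:
  assumes "f \<in> Pc r c" "0 \<le> c"
  shows "0 \<le> f z"
proof -
  have "f \<in> Cp" using assms(1) by (simp add: Pc_def)
  then have integers: "f (of_int \<lfloor>z\<rfloor>) = 0" "f (of_int \<lfloor>z\<rfloor> + 1) = 0"
    using Cp_of_int[of f "\<lfloor>z\<rfloor> + 1"] by (simp_all add: Cp_of_int)
  define y where "y = z - of_int \<lfloor>z\<rfloor>"
  show ?thesis
  proof (cases "y = 0")
    case True
    then show ?thesis using integers by (simp add: y_def)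
  next
    case False
    then have y: "0 < y" "y < 1"
      using floor_correct[of z] by (simp_all add: y_def less_le) linarith
    have "c * y * (1 - y) \<le> f z"
      using Pc_above_chord[OF assms(1) _ y, of 0 "\<lfloor>z\<rfloor>"] integers by (simp add: y_def)
    moreover have "0 \<le> c * y * (1 - y)"
      using assms(2) y by simp
    ultimately show ?thesis by linarith
  qed
qed

lemma Pc_qf_unit_interval_grid_le:
  assumes f: "f \<in> Pc r c" and "0 < r" "0 < t" and t_large: "1 \<le> 2 * t * c * real r ^ n"
    and "0 \<le> z" "z \<le> 1"
  shows "\<exists>k\<in>{0..r ^ n}. qf f t x (real k / real r ^ n) \<le> qf f t x z"
proof -
  define R where "R = real r ^ n"
  define j where "j = nat \<lfloor>z * R\<rfloor>"
  define y where "y = z * R - real j"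
  have "0 < R" "z * R \<le> R"
    using assms(2,5,6) by (simp_all add: R_def)
  have y: "0 \<le> y" "y < 1"
    using \<open>0 < R\<close> \<open>0 \<le> z\<close> by (simp_all add: y_def j_def) linarith+
  show ?thesis
  proof (cases "y = 0")
    case True
    then have "z = real j / R" "j \<le> r ^ n"
      using \<open>0 < R\<close> \<open>z * R \<le> R\<close> by (simp_all add: y_def R_def field_simps)
    then show ?thesis by (auto simp: R_def)
  next
    case False
    then have "real j < real r ^ n"
      using \<open>z * R \<le> R\<close> y unfolding y_def R_def by linarith
    then have "j + 1 \<le> r ^ n"
      by (metis Suc_eq_plus1 Suc_leI of_nat_less_iff of_nat_power)
    define a where "a = real j / R"
    define h where "h = 1 / R"
    have z: "z = a + y * h" and a_h: "a + h = real (j + 1) / R"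
      using \<open>0 < R\<close> by (simp_all add: a_def h_def y_def field_simps)
    have "h \<le> 2 * t * c"
      using t_large \<open>0 < R\<close> by (simp add: h_def R_def divide_simps mult_ac)
    moreover have "0 \<le> h"
      using \<open>0 < R\<close> by (simp add: h_def)
    moreover have "(1 - y) * f a + y * f (a + h) + c * y * (1 - y) * h \<le> f (a + y * h)"
      using Pc_above_chord[of f r c n y "int j"] f False y \<open>0 < r\<close> \<open>0 < R\<close>
      by (simp add: a_def h_def R_def add_divide_distrib)
    ultimately have "min (qf f t x a) (qf f t x (a + h)) \<le> qf f t x z"
      unfolding qf_def z using y \<open>0 < t\<close> by (intro min_endpoints_le_interior) auto
    moreover have "j \<in> {0..r ^ n}" "j + 1 \<in> {0..r ^ n}"
      using \<open>j + 1 \<le> r ^ n\<close> by simp_all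
    ultimately show ?thesis
      unfolding a_h unfolding a_def R_def min_le_iff_disj by blast
  qed
qed

lemma Pc_qf_outside_unit_interval:
  assumes f: "f \<in> Pc r c" "0 \<le> c" and "0 < t" "0 \<le> x" "x \<le> 1" "z \<notin> {0..1}"
  shows "min (qf f t x 0) (qf f t x 1) \<le> qf f t x z"
proof -
  have "(x - 0)\<^sup>2 \<le> (x - z)\<^sup>2 \<or> (x - 1)\<^sup>2 \<le> (x - z)\<^sup>2"
    using assms(4-6) by (auto simp: abs_le_square_iff[symmetric])
  then have "(x - 0)\<^sup>2 / (2 * t) \<le> (x - z)\<^sup>2 / (2 * t) \<or> (x - 1)\<^sup>2 / (2 * t) \<le> (x - z)\<^sup>2 / (2 * t)"
    using \<open>0 < t\<close> by (auto intro: divide_right_mono)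
  moreover have "f 0 = 0" "f 1 = 0"
    using f Cp_of_int[of f 1] by (simp_all add: Pc_def Cp_def)
  ultimately show ?thesis
    using Pc_nonneg[OF f, of z] by (auto simp: qf_def min_le_iff_disj)
qed

lemma Pc_qf_grid_le:
  assumes f: "f \<in> Pc r c" and "0 < r" "0 < t" and t_large: "1 \<le> 2 * t * c * real r ^ n"
    and "0 \<le> x" "x \<le> 1"
  shows "\<exists>k\<in>{0..r ^ n}. qf f t x (real k / real r ^ n) \<le> qf f t x z"
proof (cases "z \<in> {0..1}")
  case True
  then show ?thesis
    using Pc_qf_unit_interval_grid_le[OF f \<open>0 < r\<close> \<open>0 < t\<close> t_large] by auto
next
  case False
  have "0 < c * (2 * t * real r ^ n)" "0 \<le> 2 * t * real r ^ n"
    using t_large \<open>0 < t\<close> by (simp_all add: mult_ac)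
  then have "0 \<le> c"
    by (simp add: zero_less_mult_iff)
  then have "qf f t x (real 0 / real r ^ n) \<le> qf f t x z
             \<or> qf f t x (real (r ^ n) / real r ^ n) \<le> qf f t x z"
    using Pc_qf_outside_unit_interval[OF f _ \<open>0 < t\<close> _ _ False] assms(2,5,6)
    by (simp add: min_le_iff_disj)
  moreover have "0 \<in> {0..r ^ n}" "r ^ n \<in> {0..r ^ n}"
    by simp_all
  ultimately show ?thesis
    by blast
qed

theorem theorem4p2:
  fixes r :: nat and c :: real and f :: "real \<Rightarrow> real"
  assumes "r \<ge> 2" and "c > 0" and "f \<in> Pc r c"
  shows "\<forall>n::nat. \<forall>t x. t \<ge> 1 / (2 * c * real r ^ n) \<and> 0 \<le> x \<and> x \<le> 1 \<longrightarrow>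
           Ht t f x = (MIN k\<in>{0..r ^ n}. qf f t x (real k / real r ^ n))"
proof (intro allI impI)
  fix n :: nat and t x :: real
  assume H: "t \<ge> 1 / (2 * c * real r ^ n) \<and> 0 \<le> x \<and> x \<le> 1"
  have "0 < 2 * c * real r ^ n"
    using assms(1,2) by simp
  then have "0 < t"
    using H by (meson divide_pos_pos less_le_trans zero_less_one)
  have "1 \<le> 2 * t * c * real r ^ n"
    using H \<open>0 < 2 * c * real r ^ n\<close> by (simp add: divide_simps mult_ac)
  then show "Ht t f x = (MIN k\<in>{0..r ^ n}. qf f t x (real k / real r ^ n))"
    unfolding Ht_def using assms(1,3) H \<open>0 < t\<close>
    by (intro INF_eq_MIN_if_dominated Pc_qf_grid_le) auto
qed

end
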